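(* Consider the following setup. Let $K<\infty$ and, for $i=1,\ldots,K$, let $\{T^{(i)}_{n_i}\}$ be a sequence of test statistics for testing $H_0^{(i)}:\theta_i\in\Theta_0^{(i)}$ against $\theta_i\in\Theta^{(i)}\setminus\Theta_0^{(i)}$, with $p$-values $p_i=p_i^{(n_i)}$, independent under the null for all sample sizes, each with exact slope $c_i(\theta_i)\ge0$ (i.e. $-\frac{2}{n_i}\log p_i^{(n_i)}\to c_i(\theta_i)$ with probability one as $n_i\to\infty$), where $c_i(\theta_i)=0$ for $\theta_i\in\Theta_0^{(i)}$ and $c_i(\theta_i)>0$ otherwise. Let $n=\frac1K\sum_in_i$, $n_i/n\to\lambda_i>0$, $\sum_i\lambda_i=K$, and assume $\lambda_1c_1(\theta_1)\ge\cdots\ge\lambda_Kc_K(\theta_K)\ge0$ with $c_i(\theta_i)>0$ exactly for $1\le i\le\ell$. For a fixed $\tau\in(0,1]$ define $$T_{\mathrm{TFhard}}(\tau)=\sum_{i=1}^K(-2\log p_i)\,\mathrm{I}_{\{p_i\le\tau\}},\qquad T_{\mathrm{TFsoft}}(\tau)=\sum_{i=1}^K(-2\log p_i+2\log\tau)_+,$$ where $(x)_+=\max(x,0)$. Then both tests are ABO, with exact slopes $C_{\mathrm{TFhard}}(\vec\theta)=C_{\mathrm{TFsoft}}(\vec\theta)=\sum_{i=1}^\ell\lambda_ic_i(\theta_i)$.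
   Context: The exact slope of a combination test with $p$-value $p$ (computed from its null distribution, under which $p_1,\ldots,p_K$ are i.i.d. Unif$(0,1)$) is the function $C(\vec\theta)$ with $-\frac{2}{n}\log p\to C(\vec\theta)$ with probability one as $n\to\infty$. A combination test is asymptotically Bahadur optimal (ABO) if its exact slope equals $\sum_{i=1}^\ell\lambda_ic_i(\theta_i)$. *)

theory Defs
  imports "HOL-Probability.Probability"
begin

definition null_unif :: "nat \<Rightarrow> (nat \<Rightarrow> real) measure" where
  "null_unif K = PiM {1..K} (\<lambda>_. uniform_measure lborel {0..1})"

definition comb_stat :: "nat \<Rightarrow> (real \<Rightarrow> real) \<Rightarrow> (nat \<Rightarrow> real) \<Rightarrow> real" where
  "comb_stat K g ps = (\<Sum>i=1..K. g (ps i))"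

definition comb_pvalue :: "nat \<Rightarrow> (real \<Rightarrow> real) \<Rightarrow> (nat \<Rightarrow> real) \<Rightarrow> real" where
  "comb_pvalue K g ps =
     measure (null_unif K) {u \<in> space (null_unif K). comb_stat K g u \<ge> comb_stat K g ps}"

definition tf_hard :: "real \<Rightarrow> real \<Rightarrow> real" where
  "tf_hard \<tau> x = (if x \<le> \<tau> then -2 * ln x else 0)"

definition tf_soft :: "real \<Rightarrow> real \<Rightarrow> real" where
  "tf_soft \<tau> x = max (-2 * ln x + 2 * ln \<tau>) 0"

definition has_exact_slope ::
  "'w measure \<Rightarrow> (nat \<Rightarrow> real) \<Rightarrow> (nat \<Rightarrow> 'w \<Rightarrow> real) \<Rightarrow> real \<Rightarrow> bool" where
  "has_exact_slope M n pv C \<longleftrightarrow>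
     (AE \<omega> in M. ((\<lambda>m. - (2 / n m) * ln (pv m \<omega>)) \<longlongrightarrow> C) sequentially)"

end

theory Submission
  imports Defs
begin

text \<open>Both truncated transformations g are nonnegative and lie between -2 ln x - B and -2 ln x
  on (0,1], with B = -2 ln \<tau>. Under the null hypothesis this pins the tail of T = \<Sum> g(U_i):
  it is at least exp(-(t + B)/2), the probability that U_1 alone is small enough, and at most
  a polynomial in t times exp(-t/2), by comparison with Fisher's statistic. Hence the combined
  p-value satisfies -(2/n) ln p = T/n + o(1). Along the alternative g(p_i) = -2 ln p_i + O(1),
  so T/n tends to \<Sum> \<lambda>_i c_i, to which the tests with c_i = 0 contribute nothing.\<close>

definition close_to_fisher :: "real \<Rightarrow> (real \<Rightarrow> real) \<Rightarrow> bool" where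
  "close_to_fisher B g \<longleftrightarrow> g \<in> borel_measurable borel \<and>
     (\<forall>x\<in>{0<..1}. 0 \<le> g x \<and> - 2 * ln x - B \<le> g x \<and> g x \<le> - 2 * ln x)"

lemma close_to_fisherD:
  assumes "close_to_fisher B g" "0 < x" "x \<le> 1"
  shows "0 \<le> g x" "- 2 * ln x - B \<le> g x" "g x \<le> - 2 * ln x"
  using assms unfolding close_to_fisher_def by auto

lemma close_to_fisher_measurable:
  "close_to_fisher B g \<Longrightarrow> g \<in> borel_measurable borel"
  unfolding close_to_fisher_def by simp

lemma close_to_fisher_bound_nonneg:
  assumes "close_to_fisher B g"
  shows "0 \<le> B"
  using close_to_fisherD(2,3)[OF assms, of 1] by simp

lemma close_to_fisher_tf_hard:
  assumes "0 < \<tau>" "\<tau> \<le> 1"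
  shows "close_to_fisher (- 2 * ln \<tau>) (tf_hard \<tau>)"
  unfolding close_to_fisher_def
proof (intro conjI ballI)
  show "tf_hard \<tau> \<in> borel_measurable borel" unfolding tf_hard_def by measurable
  fix x :: real assume "x \<in> {0<..1}"
  then have "ln x \<le> 0" by simp
  show "0 \<le> tf_hard \<tau> x" "tf_hard \<tau> x \<le> - 2 * ln x"
    using \<open>ln x \<le> 0\<close> by (simp_all add: tf_hard_def)
  show "- 2 * ln x - - 2 * ln \<tau> \<le> tf_hard \<tau> x"
  proof (cases "x \<le> \<tau>")
    case True
    then show ?thesis using assms by (simp add: tf_hard_def)
  next
    case False
    then have "ln \<tau> \<le> ln x" using assms by simp
    then show ?thesis using False by (simp add: tf_hard_def)
  qed
qed

lemma close_to_fisher_tf_soft: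
  assumes "0 < \<tau>" "\<tau> \<le> 1"
  shows "close_to_fisher (- 2 * ln \<tau>) (tf_soft \<tau>)"
  unfolding close_to_fisher_def
proof (intro conjI ballI)
  show "tf_soft \<tau> \<in> borel_measurable borel" unfolding tf_soft_def by measurable
  fix x :: real assume "x \<in> {0<..1}"
  then have "ln x \<le> 0" by simp
  moreover have "ln \<tau> \<le> 0" using assms by simp
  ultimately show "0 \<le> tf_soft \<tau> x" "- 2 * ln x - - 2 * ln \<tau> \<le> tf_soft \<tau> x"
    "tf_soft \<tau> x \<le> - 2 * ln x"
    by (simp_all add: tf_soft_def)
qed

lemma prob_space_null_unif: "prob_space (null_unif K)"
  unfolding null_unif_def by (intro prob_space_PiM prob_space_uniform_measure) simp_all

lemma measure_null_unif_box:
  assumes "\<And>i. i \<in> {1..K} \<Longrightarrow> 0 \<le> a i \<and> a i \<le> 1"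
  shows "measure (null_unif K) (PiE {1..K} (\<lambda>i. {0<..a i})) = (\<Prod>i=1..K. a i)"
proof -
  interpret product_prob_space "\<lambda>_. uniform_measure lborel {0..1::real}" "{1..K}"
  proof -
    interpret prob_space "uniform_measure lborel {0..1::real}"
      by (rule prob_space_uniform_measure) simp_all
    show "product_prob_space (\<lambda>_. uniform_measure lborel {0..1::real})" by unfold_locales
  qed
  have "emeasure (null_unif K) (PiE {1..K} (\<lambda>i. {0<..a i}))
      = (\<Prod>i=1..K. emeasure (uniform_measure lborel {0..1}) {0<..a i})"
    unfolding null_unif_def by (rule emeasure_PiM) simp_all
  also have "\<dots> = (\<Prod>i=1..K. ennreal (a i))"
  proof (rule prod.cong)
    fix i assume i: "i \<in> {1..K}"
    then have "{0..1} \<inter> {0<..a i} = {0<..a i}" using assms[OF i] by auto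
    then show "emeasure (uniform_measure lborel {0..1}) {0<..a i} = ennreal (a i)"
      using assms[OF i] by (simp add: divide_ennreal_def)
  qed simp
  also have "\<dots> = ennreal (\<Prod>i=1..K. a i)"
    by (rule prod_ennreal) (use assms in simp)
  moreover have "0 \<le> (\<Prod>i=1..K. a i)"
    by (rule prod_nonneg) (use assms in blast)
  ultimately show ?thesis
    by (simp add: measure_def)
qed

lemma comb_stat_measurable:
  assumes "g \<in> borel_measurable borel"
  shows "comb_stat K g \<in> borel_measurable (null_unif K)"
  unfolding comb_stat_def null_unif_def using assms by measurable

definition null_tail :: "nat \<Rightarrow> (real \<Rightarrow> real) \<Rightarrow> real \<Rightarrow> real" where
  "null_tail K g t = measure (null_unif K) {u \<in> space (null_unif K). t \<le> comb_stat K g u}"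

lemma comb_pvalue_eq_null_tail: "comb_pvalue K g ps = null_tail K g (comb_stat K g ps)"
  unfolding comb_pvalue_def null_tail_def ..

lemma space_null_unif: "space (null_unif K) = PiE {1..K} (\<lambda>_. UNIV)"
  unfolding null_unif_def by (simp add: space_PiM)

lemma null_unif_box_sets: "PiE {1..K} (\<lambda>i. {0<..a i}) \<in> sets (null_unif K)"
  unfolding null_unif_def by (rule sets_PiM_I_finite) auto

lemma null_tail_lower:
  assumes K: "1 \<le> K" and g: "close_to_fisher B g" and t: "0 \<le> t"
  shows "exp (- (t + B) / 2) \<le> null_tail K g t"
proof -
  interpret prob_space "null_unif K" by (rule prob_space_null_unif)
  define e where "e = exp (- (t + B) / 2)"
  define box where "box = PiE {1..K} (\<lambda>i. {0<..if i = 1 then e else 1})"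
  have e: "0 < e" "e \<le> 1"
    using t close_to_fisher_bound_nonneg[OF g] by (auto simp: e_def)
  have "measure (null_unif K) box = (\<Prod>i=1..K. if i = 1 then e else 1)"
    unfolding box_def by (rule measure_null_unif_box) (use e in auto)
  also have "\<dots> = e"
    using K by (simp add: prod.delta)
  finally have measure_box: "measure (null_unif K) box = e" .
  have "box \<subseteq> {u \<in> space (null_unif K). t \<le> comb_stat K g u}"
  proof
    fix u assume u: "u \<in> box"
    have u01: "0 < u i \<and> u i \<le> 1" if "i \<in> {1..K}" for i
    proof -
      have "u i \<in> {0<..if i = 1 then e else 1}"
        using PiE_mem[OF u[unfolded box_def] that] .
      then show ?thesis
        using e by (auto split: if_splits)
    qed
    have "u 1 \<in> {0<..e}"
      using PiE_mem[OF u[unfolded box_def], of 1] K by simp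
    then have "ln (u 1) \<le> ln e"
      using e(1) by simp
    then have "t \<le> - 2 * ln (u 1) - B"
      by (simp add: e_def)
    also have "\<dots> \<le> g (u 1)"
      using close_to_fisherD(2)[OF g] u01[of 1] K by auto
    also have "\<dots> \<le> comb_stat K g u"
      unfolding comb_stat_def
      by (rule member_le_sum) (use K close_to_fisherD(1)[OF g] u01 in auto)
    finally show "u \<in> {u \<in> space (null_unif K). t \<le> comb_stat K g u}"
      using u unfolding box_def space_null_unif by auto
  qed
  moreover have "{u \<in> space (null_unif K). t \<le> comb_stat K g u} \<in> sets (null_unif K)"
    using comb_stat_measurable[OF close_to_fisher_measurable[OF g]] by measurable
  ultimately have "measure (null_unif K) box \<le> null_tail K g t"
    unfolding null_tail_def by (rule finite_measure_mono)
  then show ?thesis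
    using measure_box by (simp add: e_def)
qed

lemma ln_sum_cover:
  fixes u :: "'a \<Rightarrow> real"
  assumes "finite I" and u: "\<forall>i\<in>I. 0 < u i \<and> u i \<le> 1"
    and large: "real M + real (card I) \<le> (\<Sum>i\<in>I. - ln (u i))"
  obtains k where "k \<in> PiE I (\<lambda>_. {0..M})" "M \<le> sum k I" "\<forall>i\<in>I. u i \<le> exp (- real (k i))"
proof -
  define k where "k = restrict (\<lambda>i. min (nat \<lfloor>- ln (u i)\<rfloor>) M) I"
  have "k \<in> PiE I (\<lambda>_. {0..M})"
    by (auto simp: k_def)
  moreover have "M \<le> sum k I"
  proof (cases "\<exists>i\<in>I. M \<le> nat \<lfloor>- ln (u i)\<rfloor>")
    case True
    then obtain j where j: "j \<in> I" "M \<le> nat \<lfloor>- ln (u j)\<rfloor>" ..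
    then have "M = k j"
      unfolding k_def by simp
    also have "\<dots> \<le> sum k I"
      by (rule member_le_sum) (use j \<open>finite I\<close> in auto)
    finally show ?thesis .
  next
    case False
    have "- ln (u i) - 1 \<le> real (k i)" if "i \<in> I" for i
    proof -
      have "k i = nat \<lfloor>- ln (u i)\<rfloor>"
        using False that unfolding k_def by auto
      then show ?thesis
        by linarith
    qed
    then have "(\<Sum>i\<in>I. - ln (u i)) - real (card I) \<le> real (sum k I)"
      using sum_mono[of I "\<lambda>i. - ln (u i) - 1" "\<lambda>i. real (k i)"] by (simp add: sum_subtractf)
    then show ?thesis
      using large by linarith
  qed
  moreover have "\<forall>i\<in>I. u i \<le> exp (- real (k i))"
  proof
    fix i assume i: "i \<in> I"
    have "0 \<le> - ln (u i)"
      using u i by simp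
    then have "real (nat \<lfloor>- ln (u i)\<rfloor>) \<le> - ln (u i)"
      by linarith
    then have "real (k i) \<le> - ln (u i)"
      using i unfolding k_def by simp
    then have "exp (ln (u i)) \<le> exp (- real (k i))"
      by simp
    then show "u i \<le> exp (- real (k i))"
      using u i by simp
  qed
  ultimately show thesis
    by (rule that)
qed

lemma measure_null_unif_le_boxes:
  fixes a :: "'k \<Rightarrow> nat \<Rightarrow> real"
  assumes F: "finite F" and a: "\<And>k i. k \<in> F \<Longrightarrow> i \<in> {1..K} \<Longrightarrow> 0 \<le> a k i \<and> a k i \<le> 1"
    and A: "A \<subseteq> space (null_unif K)"
    and cover: "\<And>u. u \<in> A \<Longrightarrow> \<forall>i\<in>{1..K}. 0 < u i \<and> u i \<le> 1 \<Longrightarrow>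
      \<exists>k\<in>F. \<forall>i\<in>{1..K}. u i \<le> a k i"
  shows "measure (null_unif K) A \<le> (\<Sum>k\<in>F. \<Prod>i=1..K. a k i)"
proof -
  interpret prob_space "null_unif K" by (rule prob_space_null_unif)
  define box where "box k = PiE {1..K} (\<lambda>i. {0<..a k i})" for k
  define Z where "Z = space (null_unif K) - PiE {1..K} (\<lambda>_. {0<..1::real})"
  have box_sets: "box k \<in> sets (null_unif K)" for k
    unfolding box_def by (rule null_unif_box_sets)
  have Z: "Z \<in> sets (null_unif K)" "measure (null_unif K) Z = 0"
  proof -
    have box01: "PiE {1..K} (\<lambda>_. {0<..1::real}) \<in> sets (null_unif K)"
      by (rule null_unif_box_sets)
    then show "Z \<in> sets (null_unif K)"
      unfolding Z_def by auto
    have "measure (null_unif K) (PiE {1..K} (\<lambda>_. {0<..1::real})) = 1"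
      using measure_null_unif_box[of K "\<lambda>_. 1"] by simp
    then show "measure (null_unif K) Z = 0"
      unfolding Z_def using prob_compl[OF box01] by simp
  qed
  have "A \<subseteq> Z \<union> (\<Union>k\<in>F. box k)"
  proof
    fix u assume u: "u \<in> A"
    show "u \<in> Z \<union> (\<Union>k\<in>F. box k)"
    proof (cases "u \<in> Z")
      case False
      then have u01: "u \<in> PiE {1..K} (\<lambda>_. {0<..1::real})"
        using u A unfolding Z_def by blast
      then have "\<forall>i\<in>{1..K}. 0 < u i \<and> u i \<le> 1"
        by auto
      then obtain k where "k \<in> F" "\<forall>i\<in>{1..K}. u i \<le> a k i"
        using cover[OF u] by blast
      moreover from this(2) have "u \<in> box k"
        using u01 unfolding box_def by (auto simp: PiE_iff)
      ultimately show ?thesis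
        by blast
    qed blast
  qed
  moreover have "(\<Union>k\<in>F. box k) \<in> sets (null_unif K)"
    using F box_sets by blast
  ultimately have "measure (null_unif K) A \<le> measure (null_unif K) (Z \<union> (\<Union>k\<in>F. box k))"
    using Z(1) by (intro finite_measure_mono) auto
  also have "\<dots> \<le> measure (null_unif K) Z + measure (null_unif K) (\<Union>k\<in>F. box k)"
    using Z(1) box_sets F by (intro measure_Un_le) auto
  also have "\<dots> \<le> (\<Sum>k\<in>F. measure (null_unif K) (box k))"
    using finite_measure_subadditive_finite[OF F, of box] box_sets Z(2) by auto
  also have "\<dots> = (\<Sum>k\<in>F. \<Prod>i=1..K. a k i)"
    unfolding box_def using a by (intro sum.cong refl measure_null_unif_box) auto
  finally show ?thesis .
qed

text \<open>Rather than computing the chi-square tail of Fisher's statistic, discretise -ln U_i: the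
  event is covered, up to a null set, by at most (M + 1)^K boxes of the form
  (0, exp(-k_1)] \<times> ... \<times> (0, exp(-k_K)] with k_1 + ... + k_K \<ge> M.\<close>

lemma null_tail_upper:
  assumes g: "\<forall>x\<in>{0<..1}. g x \<le> - 2 * ln x" and M: "real M + real K \<le> t / 2"
  shows "null_tail K g t \<le> real (M + 1) ^ K * exp (- real M)"
proof -
  define F where "F = PiE {1..K} (\<lambda>_. {0..M}) \<inter> {k. M \<le> sum k {1..K}}"
  have F: "finite F" "card F \<le> (M + 1) ^ K"
  proof -
    have "finite (PiE {1..K} (\<lambda>_. {0..M}))"
      by (rule finite_PiE) auto
    moreover have "card (PiE {1..K} (\<lambda>_. {0..M})) = (M + 1) ^ K"
      by (simp add: card_PiE)
    ultimately show "finite F" "card F \<le> (M + 1) ^ K"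
      unfolding F_def by (metis finite_Int card_mono inf_le1)+
  qed
  have "null_tail K g t \<le> (\<Sum>k\<in>F. \<Prod>i=1..K. exp (- real (k i)))"
    unfolding null_tail_def
  proof (rule measure_null_unif_le_boxes[OF F(1)])
    fix u assume u: "u \<in> {u \<in> space (null_unif K). t \<le> comb_stat K g u}"
      and u01: "\<forall>i\<in>{1..K}. 0 < u i \<and> u i \<le> 1"
    have "t \<le> (\<Sum>i=1..K. g (u i))"
      using u unfolding comb_stat_def by simp
    also have "\<dots> \<le> (\<Sum>i=1..K. - 2 * ln (u i))"
      by (rule sum_mono) (use g u01 in auto)
    also have "\<dots> = 2 * (\<Sum>i=1..K. - ln (u i))"
      by (simp add: sum_distrib_left)
    finally have "real M + real (card {1..K}) \<le> (\<Sum>i=1..K. - ln (u i))"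
      using M by simp
    then obtain k where "k \<in> PiE {1..K} (\<lambda>_. {0..M})" "M \<le> sum k {1..K}"
      "\<forall>i\<in>{1..K}. u i \<le> exp (- real (k i))"
      using ln_sum_cover[OF _ u01] by blast
    then show "\<exists>k\<in>F. \<forall>i\<in>{1..K}. u i \<le> exp (- real (k i))"
      unfolding F_def by blast
  qed auto
  also have "\<dots> \<le> (\<Sum>k\<in>F. exp (- real M))"
  proof (rule sum_mono)
    fix k assume "k \<in> F"
    then have "M \<le> sum k {1..K}"
      unfolding F_def by blast
    then have "exp (- real (sum k {1..K})) \<le> exp (- real M)"
      by (simp only: exp_le_cancel_iff neg_le_iff_le of_nat_le_iff)
    then show "(\<Prod>i=1..K. exp (- real (k i))) \<le> exp (- real M)"
      by (simp add: exp_sum[symmetric] sum_negf)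
  qed
  also have "\<dots> \<le> real (M + 1) ^ K * exp (- real M)"
    using F(2) by (simp del: of_nat_Suc flip: of_nat_power)
  finally show ?thesis .
qed

lemma ln_null_tail_bounds:
  assumes K: "1 \<le> K" and g: "close_to_fisher B g" and t: "0 \<le> t"
  shows "- t / 2 - B / 2 \<le> ln (null_tail K g t)"
    and "ln (null_tail K g t) \<le> - t / 2 + (real K + 1) + real K * ln (1 + t / 2)"
proof -
  let ?Q = "null_tail K g t"
  have lower: "exp (- (t + B) / 2) \<le> ?Q"
    by (rule null_tail_lower[OF K g t])
  have Q: "0 < ?Q" "?Q \<le> 1"
    using lower exp_gt_zero[of "- (t + B) / 2"] prob_space.prob_le_1[OF prob_space_null_unif]
    unfolding null_tail_def by (linarith, blast)
  have "ln (exp (- (t + B) / 2)) \<le> ln ?Q"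
    using lower Q(1) by (subst ln_le_cancel_iff) auto
  then show "- t / 2 - B / 2 \<le> ln ?Q"
    by simp
  have ln_t: "0 \<le> ln (1 + t / 2)"
    using t by simp
  show "ln ?Q \<le> - t / 2 + (real K + 1) + real K * ln (1 + t / 2)"
  proof (cases "real K \<le> t / 2")
    case False
    have "ln ?Q \<le> 0"
      using Q by simp
    then show ?thesis
      using False mult_nonneg_nonneg[OF of_nat_0_le_iff[of K] ln_t] by linarith
  next
    case True
    define M where "M = nat \<lfloor>t / 2 - real K\<rfloor>"
    have M: "real M \<le> t / 2 - real K" "t / 2 - real K - 1 < real M"
      using True unfolding M_def by linarith+
    have "?Q \<le> real (M + 1) ^ K * exp (- real M)"
      by (rule null_tail_upper) (use M close_to_fisherD(3)[OF g] in auto)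
    then have "ln ?Q \<le> ln (real (M + 1) ^ K * exp (- real M))"
      using Q by simp
    also have "\<dots> = real K * ln (1 + real M) - real M"
      by (simp add: ln_mult ln_realpow add.commute)
    also have "\<dots> \<le> real K * ln (1 + t / 2) - real M"
      using M by (simp add: mult_left_mono)
    finally show ?thesis
      using M by linarith
  qed
qed

lemma ln_le_two_sqrt:
  fixes y :: real
  assumes "0 < y"
  shows "ln y \<le> 2 * sqrt y"
proof -
  have "ln (sqrt y) \<le> sqrt y - 1"
    using assms by (intro ln_le_minus_one) simp
  then show ?thesis
    using assms by (simp add: ln_sqrt)
qed

lemma tendsto_ln_add_one_div_at_top:
  fixes n t :: "nat \<Rightarrow> real"
  assumes n: "filterlim n at_top sequentially" and t: "\<forall>\<^sub>F m in sequentially. 0 \<le> t m"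
    and lim: "((\<lambda>m. t m / n m) \<longlongrightarrow> S) sequentially"
  shows "((\<lambda>m. ln (1 + t m) / n m) \<longlongrightarrow> 0) sequentially"
proof -
  have inv: "((\<lambda>m. 1 / n m) \<longlongrightarrow> 0) sequentially"
    by (rule tendsto_divide_0[OF tendsto_const filterlim_at_top_imp_at_infinity[OF n]])
  have "((\<lambda>m. 2 * sqrt (t m / n m * (1 / n m) + 1 / n m * (1 / n m)))
      \<longlongrightarrow> 2 * sqrt (S * 0 + 0 * 0)) sequentially"
    by (intro tendsto_intros lim inv)
  then have bound: "((\<lambda>m. 2 * sqrt (t m / n m * (1 / n m) + 1 / n m * (1 / n m)))
      \<longlongrightarrow> 0) sequentially"
    by simp
  have n_pos: "\<forall>\<^sub>F m in sequentially. 0 < n m"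
    using n by (simp add: filterlim_at_top_dense)
  show ?thesis
  proof (rule tendsto_sandwich[OF _ _ tendsto_const bound])
    show "\<forall>\<^sub>F m in sequentially. 0 \<le> ln (1 + t m) / n m"
      using t n_pos by eventually_elim simp
    show "\<forall>\<^sub>F m in sequentially.
        ln (1 + t m) / n m \<le> 2 * sqrt (t m / n m * (1 / n m) + 1 / n m * (1 / n m))"
      using t n_pos
    proof eventually_elim
      case (elim m)
      have "t m / n m * (1 / n m) + 1 / n m * (1 / n m) = (1 + t m) / (n m)\<^sup>2"
        by (simp add: add_divide_distrib power2_eq_square)
      then have "2 * sqrt (t m / n m * (1 / n m) + 1 / n m * (1 / n m)) = 2 * sqrt (1 + t m) / n m"
        using elim by (simp add: real_sqrt_divide)
      moreover have "ln (1 + t m) \<le> 2 * sqrt (1 + t m)"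
        using elim by (intro ln_le_two_sqrt) simp
      ultimately show ?case
        using elim by (simp add: divide_right_mono)
    qed
  qed
qed

lemma tendsto_slope_squeeze:
  fixes n t p :: "nat \<Rightarrow> real"
  assumes n: "filterlim n at_top sequentially" and t: "\<forall>\<^sub>F m in sequentially. 0 \<le> t m"
    and lim: "((\<lambda>m. t m / n m) \<longlongrightarrow> S) sequentially"
    and lower: "\<forall>\<^sub>F m in sequentially. - t m / 2 - E \<le> ln (p m)"
    and upper: "\<forall>\<^sub>F m in sequentially. ln (p m) \<le> - t m / 2 + C + D * ln (1 + t m / 2)"
  shows "((\<lambda>m. - (2 / n m) * ln (p m)) \<longlongrightarrow> S) sequentially"
proof -
  have inv: "((\<lambda>m. 1 / n m) \<longlongrightarrow> 0) sequentially"
    by (rule tendsto_divide_0[OF tendsto_const filterlim_at_top_imp_at_infinity[OF n]])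
  have "((\<lambda>m. ln (1 + t m / 2) / n m) \<longlongrightarrow> 0) sequentially"
  proof (rule tendsto_ln_add_one_div_at_top[OF n])
    show "\<forall>\<^sub>F m in sequentially. 0 \<le> t m / 2"
      using t by eventually_elim simp
    show "((\<lambda>m. t m / 2 / n m) \<longlongrightarrow> S / 2) sequentially"
      using tendsto_divide[OF lim tendsto_const, of 2] by (simp add: mult.commute)
  qed
  then have "((\<lambda>m. t m / n m - 2 * C * (1 / n m) - 2 * D * (ln (1 + t m / 2) / n m))
      \<longlongrightarrow> S - 2 * C * 0 - 2 * D * 0) sequentially"
    by (intro tendsto_intros lim inv)
  then have below: "((\<lambda>m. t m / n m - 2 * C * (1 / n m) - 2 * D * (ln (1 + t m / 2) / n m))
      \<longlongrightarrow> S) sequentially"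
    by simp
  have "((\<lambda>m. t m / n m + 2 * E * (1 / n m)) \<longlongrightarrow> S + 2 * E * 0) sequentially"
    by (intro tendsto_intros lim inv)
  then have above: "((\<lambda>m. t m / n m + 2 * E * (1 / n m)) \<longlongrightarrow> S) sequentially"
    by simp
  have n_pos: "\<forall>\<^sub>F m in sequentially. 0 < n m"
    using n by (simp add: filterlim_at_top_dense)
  show ?thesis
  proof (rule tendsto_sandwich[OF _ _ below above])
    show "\<forall>\<^sub>F m in sequentially. t m / n m - 2 * C * (1 / n m) - 2 * D * (ln (1 + t m / 2) / n m)
        \<le> - (2 / n m) * ln (p m)"
      using upper n_pos
    proof eventually_elim
      case (elim m)
      then have "(t m - 2 * C - 2 * D * ln (1 + t m / 2)) / n m \<le> (- 2 * ln (p m)) / n m"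
        by (intro divide_right_mono) auto
      then show ?case
        by (simp add: diff_divide_distrib)
    qed
    show "\<forall>\<^sub>F m in sequentially. - (2 / n m) * ln (p m) \<le> t m / n m + 2 * E * (1 / n m)"
      using lower n_pos
    proof eventually_elim
      case (elim m)
      then have "(- 2 * ln (p m)) / n m \<le> (t m + 2 * E) / n m"
        by (intro divide_right_mono) auto
      then show ?case
        by (simp add: add_divide_distrib)
    qed
  qed
qed

lemma tendsto_transformed_pvalue_div:
  fixes p :: "nat \<Rightarrow> real" and N :: "nat \<Rightarrow> nat" and n :: "nat \<Rightarrow> real"
  assumes g: "close_to_fisher B g"
    and p: "\<forall>\<^sub>F k in sequentially. 0 < p k \<and> p k \<le> 1"
    and slope: "((\<lambda>k. - (2 / real k) * ln (p k)) \<longlongrightarrow> c) sequentially"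
    and N: "filterlim N at_top sequentially" and n: "filterlim n at_top sequentially"
    and ratio: "((\<lambda>m. real (N m) / n m) \<longlongrightarrow> lam) sequentially"
  shows "((\<lambda>m. g (p (N m)) / n m) \<longlongrightarrow> lam * c) sequentially"
proof -
  have "((\<lambda>m. - (2 / real (N m)) * ln (p (N m)) * (real (N m) / n m)) \<longlongrightarrow> c * lam) sequentially"
    by (intro tendsto_mult filterlim_compose[OF slope N] ratio)
  moreover have "\<forall>\<^sub>F m in sequentially.
      - (2 / real (N m)) * ln (p (N m)) * (real (N m) / n m) = - 2 * ln (p (N m)) / n m"
    using eventually_compose_filterlim[OF eventually_gt_at_top[of 0] N] by eventually_elim simp
  ultimately have "((\<lambda>m. - 2 * ln (p (N m)) / n m) \<longlongrightarrow> c * lam) sequentially"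
    by (rule Lim_transform_eventually)
  then have fisher: "((\<lambda>m. - 2 * ln (p (N m)) / n m) \<longlongrightarrow> lam * c) sequentially"
    by (simp only: mult.commute)
  have inv: "((\<lambda>m. 1 / n m) \<longlongrightarrow> 0) sequentially"
    by (rule tendsto_divide_0[OF tendsto_const filterlim_at_top_imp_at_infinity[OF n]])
  have "((\<lambda>m. - 2 * ln (p (N m)) / n m - B * (1 / n m)) \<longlongrightarrow> lam * c - B * 0) sequentially"
    by (intro tendsto_intros fisher inv)
  then have below: "((\<lambda>m. - 2 * ln (p (N m)) / n m - B * (1 / n m)) \<longlongrightarrow> lam * c) sequentially"
    by simp
  have n_pos: "\<forall>\<^sub>F m in sequentially. 0 < n m"
    using n by (simp add: filterlim_at_top_dense)
  have pN: "\<forall>\<^sub>F m in sequentially. 0 < p (N m) \<and> p (N m) \<le> 1"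
    by (rule eventually_compose_filterlim[OF p N])
  show ?thesis
  proof (rule tendsto_sandwich[OF _ _ below fisher])
    show "\<forall>\<^sub>F m in sequentially. - 2 * ln (p (N m)) / n m - B * (1 / n m) \<le> g (p (N m)) / n m"
      using pN n_pos
    proof eventually_elim
      case (elim m)
      then have "(- 2 * ln (p (N m)) - B) / n m \<le> g (p (N m)) / n m"
        using close_to_fisherD(2)[OF g] by (intro divide_right_mono) auto
      then show ?case
        by (simp add: diff_divide_distrib)
    qed
    show "\<forall>\<^sub>F m in sequentially. g (p (N m)) / n m \<le> - 2 * ln (p (N m)) / n m"
      using pN n_pos
    proof eventually_elim
      case (elim m)
      then show ?case
        using close_to_fisherD(3)[OF g] by (intro divide_right_mono) auto
    qed
  qed
qed

lemma filterlim_sum_div_at_top: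
  fixes N :: "'i \<Rightarrow> nat \<Rightarrow> nat"
  assumes "finite I" "i \<in> I" "filterlim (N i) at_top sequentially" "0 < c"
  shows "filterlim (\<lambda>m. (\<Sum>j\<in>I. real (N j m)) / c) at_top sequentially"
proof -
  have "filterlim (\<lambda>m. real (N i m)) at_top sequentially"
    using filterlim_compose[OF filterlim_real_sequentially assms(3)] by (simp add: o_def)
  then have lim: "filterlim (\<lambda>m. (1 / c) * real (N i m)) at_top sequentially"
    using assms(4) by (intro filterlim_tendsto_pos_mult_at_top[OF tendsto_const]) simp_all
  have "(1 / c) * real (N i m) \<le> (\<Sum>j\<in>I. real (N j m)) / c" for m
    using member_le_sum[of i I "\<lambda>j. real (N j m)"] assms by (simp add: divide_right_mono)
  then show ?thesis
    by (intro filterlim_at_top_mono[OF lim] always_eventually) simp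
qed

lemma exact_slope_comb_pvalue:
  fixes M :: "'w measure" and P :: "nat \<Rightarrow> nat \<Rightarrow> 'w \<Rightarrow> real" and N :: "nat \<Rightarrow> nat \<Rightarrow> nat"
    and n :: "nat \<Rightarrow> real" and c lam :: "nat \<Rightarrow> real"
  assumes K: "1 \<le> K" and g: "close_to_fisher B g"
    and pval_range: "\<forall>i\<in>{1..K}. \<forall>k \<omega>. 0 \<le> P i k \<omega> \<and> P i k \<omega> \<le> 1"
    and slopes: "\<forall>i\<in>{1..K}. AE \<omega> in M. (\<forall>\<^sub>F k in sequentially. 0 < P i k \<omega>) \<and>
                   ((\<lambda>k. - (2 / real k) * ln (P i k \<omega>)) \<longlongrightarrow> c i) sequentially"
    and N_lim: "\<forall>i\<in>{1..K}. filterlim (N i) at_top sequentially"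
    and n: "filterlim n at_top sequentially"
    and ratio: "\<forall>i\<in>{1..K}. ((\<lambda>m. real (N i m) / n m) \<longlongrightarrow> lam i) sequentially"
  shows "has_exact_slope M n (\<lambda>m \<omega>. comb_pvalue K g (\<lambda>i. P i (N i m) \<omega>)) (\<Sum>i=1..K. lam i * c i)"
proof -
  have "AE \<omega> in M. \<forall>i\<in>{1..K}. (\<forall>\<^sub>F k in sequentially. 0 < P i k \<omega>) \<and>
      ((\<lambda>k. - (2 / real k) * ln (P i k \<omega>)) \<longlongrightarrow> c i) sequentially"
    using slopes by (subst AE_finite_all) auto
  then show ?thesis
    unfolding has_exact_slope_def
  proof eventually_elim
    case (elim \<omega>)
    define t where "t m = comb_stat K g (\<lambda>i. P i (N i m) \<omega>)" for m
    have p: "\<forall>\<^sub>F k in sequentially. 0 < P i k \<omega> \<and> P i k \<omega> \<le> 1" if "i \<in> {1..K}" for i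
      using elim that pval_range by (auto elim: eventually_mono)
    have "\<forall>\<^sub>F m in sequentially. \<forall>i\<in>{1..K}. 0 < P i (N i m) \<omega> \<and> P i (N i m) \<omega> \<le> 1"
      using eventually_compose_filterlim[OF p N_lim[rule_format]] by (intro eventually_ball_finite) auto
    then have t: "\<forall>\<^sub>F m in sequentially. 0 \<le> t m"
      by eventually_elim (auto simp: t_def comb_stat_def intro!: sum_nonneg close_to_fisherD(1)[OF g])
    have "((\<lambda>m. \<Sum>i=1..K. g (P i (N i m) \<omega>) / n m) \<longlongrightarrow> (\<Sum>i=1..K. lam i * c i)) sequentially"
      using elim pval_range N_lim ratio
      by (intro tendsto_sum tendsto_transformed_pvalue_div[OF g p _ _ n]) auto
    then have lim: "((\<lambda>m. t m / n m) \<longlongrightarrow> (\<Sum>i=1..K. lam i * c i)) sequentially"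
      by (simp add: t_def comb_stat_def sum_divide_distrib)
    have bounds: "\<forall>\<^sub>F m in sequentially.
        - t m / 2 - B / 2 \<le> ln (comb_pvalue K g (\<lambda>i. P i (N i m) \<omega>)) \<and>
        ln (comb_pvalue K g (\<lambda>i. P i (N i m) \<omega>))
          \<le> - t m / 2 + (real K + 1) + real K * ln (1 + t m / 2)"
      using t
    proof eventually_elim
      case (elim m)
      have "comb_pvalue K g (\<lambda>i. P i (N i m) \<omega>) = null_tail K g (t m)"
        unfolding comb_pvalue_eq_null_tail t_def ..
      then show ?case
        using ln_null_tail_bounds[OF K g elim] by simp
    qed
    show ?case
      by (rule tendsto_slope_squeeze[OF n t lim]) (use bounds in \<open>auto elim: eventually_mono\<close>)
  qed
qed

theorem theorem4:
  fixes M :: "'w measure"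
    and K L :: nat
    and P :: "nat \<Rightarrow> nat \<Rightarrow> 'w \<Rightarrow> real"  \<comment> \<open>P i k \<omega>: p-value of test i at sample size k\<close>
    and N :: "nat \<Rightarrow> nat \<Rightarrow> nat"          \<comment> \<open>N i m: sample size n_i along the asymptotic index m\<close>
    and c lam :: "nat \<Rightarrow> real"
    and \<tau> :: real
  defines "nbar \<equiv> (\<lambda>m. (\<Sum>i=1..K. real (N i m)) / real K)"
  assumes "prob_space M"
    and "1 \<le> K"
    and pval_range: "\<forall>i\<in>{1..K}. \<forall>k \<omega>. 0 \<le> P i k \<omega> \<and> P i k \<omega> \<le> 1"
    and slopes: "\<forall>i\<in>{1..K}. AE \<omega> in M. (\<forall>\<^sub>F k in sequentially. 0 < P i k \<omega>) \<and>
                   ((\<lambda>k. - (2 / real k) * ln (P i k \<omega>)) \<longlongrightarrow> c i) sequentially"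
    and c_nonneg: "\<forall>i\<in>{1..K}. c i \<ge> 0"
    and N_lim: "\<forall>i\<in>{1..K}. filterlim (N i) at_top sequentially"
    and ratio: "\<forall>i\<in>{1..K}. ((\<lambda>m. real (N i m) / nbar m) \<longlongrightarrow> lam i) sequentially"
    and lam_pos: "\<forall>i\<in>{1..K}. lam i > 0"
    and lam_sum: "(\<Sum>i=1..K. lam i) = real K"
    and order: "\<forall>i\<in>{1..K}. \<forall>j\<in>{1..K}. i \<le> j \<longrightarrow> lam j * c j \<le> lam i * c i"
    and "L \<le> K"
    and pos_exact: "\<forall>i\<in>{1..K}. (c i > 0 \<longleftrightarrow> i \<le> L)"
    and "0 < \<tau>" "\<tau> \<le> 1"
  shows "has_exact_slope M nbar
           (\<lambda>m \<omega>. comb_pvalue K (tf_hard \<tau>) (\<lambda>i. P i (N i m) \<omega>)) (\<Sum>i=1..L. lam i * c i)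
       \<and> has_exact_slope M nbar
           (\<lambda>m \<omega>. comb_pvalue K (tf_soft \<tau>) (\<lambda>i. P i (N i m) \<omega>)) (\<Sum>i=1..L. lam i * c i)"
proof -
  have nbar: "filterlim nbar at_top sequentially"
    unfolding nbar_def using \<open>1 \<le> K\<close> N_lim by (intro filterlim_sum_div_at_top[of _ 1]) auto
  have "c i = 0" if "i \<in> {1..K} - {1..L}" for i
  proof -
    have "i \<in> {1..K}" "\<not> i \<le> L"
      using that by auto
    then have "\<not> 0 < c i" "0 \<le> c i"
      using pos_exact c_nonneg by auto
    then show ?thesis
      by simp
  qed
  then have slope_sum: "(\<Sum>i=1..K. lam i * c i) = (\<Sum>i=1..L. lam i * c i)"
    using \<open>L \<le> K\<close> by (intro sum.mono_neutral_right) auto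
  have slope: "has_exact_slope M nbar (\<lambda>m \<omega>. comb_pvalue K g (\<lambda>i. P i (N i m) \<omega>))
      (\<Sum>i=1..K. lam i * c i)" if "close_to_fisher B g" for B g
    by (rule exact_slope_comb_pvalue[OF \<open>1 \<le> K\<close> that pval_range slopes N_lim nbar ratio])
  show ?thesis
    unfolding slope_sum[symmetric]
    using slope[OF close_to_fisher_tf_hard] slope[OF close_to_fisher_tf_soft] \<open>0 < \<tau>\<close> \<open>\<tau> \<le> 1\<close>
    by blast
qed

end
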